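(* Let $\mathcal{A}*\mathcal{X}=\mathcal{B}$ be a consistent tensor system with unique solution $\mathcal{X}^*$, where $\mathcal{A}\in\mathbb{R}^{n_1\times n_2\times n}$, $\mathcal{B}\in\mathbb{R}^{n_1\times n_3\times n}$, $n\ge 2$, and let $2\le s<n$ with $s$ dividing $n$. Let $\alpha>0$ and $$\kappa(s)=\max_{i=1,\dots,n/s}\|\mathcal{I}-\alpha(\tilde{\mathcal{A}}^s_i)^T*\tilde{\mathcal{A}}^s_i\|_{op},\qquad \mu(s)=\max_{i,j\in\{1,\dots,n/s\},\,i\neq j}\|(\tilde{\mathcal{A}}^s_i)^T*\tilde{\mathcal{A}}^s_j\|_{op}.$$ If $\kappa(s)+\alpha\mu(s)(n/s-1)<1$, then the iterates of block cyclic frontal slice descent with block size $s$ and learning rate $\alpha$ satisfy $\lim_{t\to\infty}\mathcal{E}(t)=0$, where $\mathcal{E}(t)=\|\mathcal{X}(t)-\mathcal{X}^*\|_F^2$.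
   Context: For $\mathcal{A}\in\mathbb{R}^{n_1\times n_2\times n}$ with frontal slices $A_k=\mathcal{A}(:,:,k)$: $\mathrm{unfold}(\mathcal{A})$ stacks $A_1,\dots,A_n$ vertically, $\mathrm{fold}$ is its inverse, $\mathrm{bcirc}(\mathcal{A})$ is the $n_1n\times n_2n$ block-circulant matrix with $(p,q)$ block $A_{((p-q)\bmod n)+1}$, and $\mathcal{A}*\mathcal{X}=\mathrm{fold}(\mathrm{bcirc}(\mathcal{A})\mathrm{unfold}(\mathcal{X}))$. $\mathcal{I}$ is the identity tensor (first frontal slice the identity matrix, others zero). $\mathcal{A}^T$ transposes each frontal slice and reverses the order of slices $2,\dots,n$. $\|\cdot\|_F$ is the Frobenius norm and $\|\mathcal{C}\|_{op}=\sup_{\|\mathcal{X}\|_F=1}\|\mathcal{C}*\mathcal{X}\|_F=\|\mathrm{bcirc}(\mathcal{C})\|_2$. For $k\in\{1,\dots,n\}$, $\tilde{\mathcal{A}}_k$ has $k$-th frontal slice $A_k$ and zeros elsewhere, and $\tilde{\mathcal{A}}^s_i=\sum_{k=(i-1)s+1}^{is}\tilde{\mathcal{A}}_k$ for $i=1,\dots,n/s$. Block cyclic frontal slice descent: set $\mathcal{X}(t)=0$ for $t\le 0$; for $t=0,1,2,\dots$ let $\mathcal{R}(t+1)=\mathcal{B}-\sum_{j=0}^{n/s-1}\tilde{\mathcal{A}}^s_{((t-j)\bmod n/s)+1}*\mathcal{X}(t-j)$ and $\mathcal{X}(t+1)=\mathcal{X}(t)+\alpha(\tilde{\mathcal{A}}^s_{(t\bmod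 n/s)+1})^T*\mathcal{R}(t+1)$. *)

theory Defs
  imports "HOL-Analysis.Analysis"
begin

text \<open>Third-order real tensors are represented as functions of three natural-number
indices (row, column, frontal slice), all 0-based. The dimensions are carried explicitly;
only entries inside the index ranges are ever used.\<close>

type_synonym tensor = "nat \<Rightarrow> nat \<Rightarrow> nat \<Rightarrow> real"

text \<open>t-product of A (p x q x n) with X (q x r x n): fold(bcirc(A) unfold(X)).
Block (p',q') of bcirc(A) is slice ((p'-q') mod n), so slice k of the result is
sum over q' of A_((k-q') mod n) X_q'.\<close>
definition tprod :: "nat \<Rightarrow> nat \<Rightarrow> tensor \<Rightarrow> tensor \<Rightarrow> tensor" where
  "tprod q n A X = (\<lambda>i j k. \<Sum>l<q. \<Sum>m<n. A i l (nat ((int k - int m) mod int n)) * X l j m)"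

definition ttrans :: "nat \<Rightarrow> tensor \<Rightarrow> tensor" where
  "ttrans n A = (\<lambda>i j k. A j i ((n - k) mod n))"

definition tident :: tensor where
  "tident = (\<lambda>i j k. if i = j \<and> k = 0 then 1 else 0)"

definition tfrob :: "nat \<Rightarrow> nat \<Rightarrow> nat \<Rightarrow> tensor \<Rightarrow> real" where
  "tfrob p q n X = sqrt (\<Sum>i<p. \<Sum>j<q. \<Sum>k<n. (X i j k)\<^sup>2)"

text \<open>Operator norm of C (p x q x n): sup of ||C * X||_F over X with ||X||_F = 1
(X ranging over q x 1 x n tensors; this equals the spectral norm of bcirc(C)).\<close>
definition topnorm :: "nat \<Rightarrow> nat \<Rightarrow> nat \<Rightarrow> tensor \<Rightarrow> real" where
  "topnorm p q n C = Sup {tfrob p 1 n (tprod q n C X) | X. tfrob q 1 n X = 1}"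

text \<open>Block-slice tensor: keeps frontal slices i*s, ..., i*s+s-1 (0-based block index i,
corresponding to the paper's block i+1) and zeros elsewhere.\<close>
definition blockslice :: "nat \<Rightarrow> tensor \<Rightarrow> nat \<Rightarrow> tensor" where
  "blockslice s A i = (\<lambda>a b k. if i * s \<le> k \<and> k < i * s + s then A a b k else 0)"

definition kappa :: "nat \<Rightarrow> nat \<Rightarrow> nat \<Rightarrow> nat \<Rightarrow> real \<Rightarrow> tensor \<Rightarrow> real" where
  "kappa n1 n2 n s \<alpha> A = Max ((\<lambda>i. topnorm n2 n2 n
      (\<lambda>a b k. tident a b k - \<alpha> * tprod n1 n (ttrans n (blockslice s A i)) (blockslice s A i) a b k))
      ` {..<n div s})"

definition mu :: "nat \<Rightarrow> nat \<Rightarrow> nat \<Rightarrow> nat \<Rightarrow> tensor \<Rightarrow> real" where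
  "mu n1 n2 n s A = Max {topnorm n2 n2 n (tprod n1 n (ttrans n (blockslice s A i)) (blockslice s A j))
      | i j. i < n div s \<and> j < n div s \<and> i \<noteq> j}"

text \<open>Block cyclic frontal slice descent. Iterate index t is the paper's X(t), with X(0)=0
(and X(t)=0 for t<0 handled by the guard j \<le> t). Block index (t-j) mod (n/s) is 0-based.\<close>
fun bcfsd :: "nat \<Rightarrow> nat \<Rightarrow> nat \<Rightarrow> nat \<Rightarrow> real \<Rightarrow> tensor \<Rightarrow> tensor \<Rightarrow> nat \<Rightarrow> tensor" where
  "bcfsd n1 n2 n s \<alpha> A B 0 = (\<lambda>i j k. 0)"
| "bcfsd n1 n2 n s \<alpha> A B (Suc t) =
     (let R = (\<lambda>a b k. B a b k - (\<Sum>j<n div s. if j \<le> t then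
                 tprod n2 n (blockslice s A (nat ((int t - int j) mod int (n div s))))
                    (bcfsd n1 n2 n s \<alpha> A B (t - j)) a b k else 0))
      in (\<lambda>a b k. bcfsd n1 n2 n s \<alpha> A B t a b k +
            \<alpha> * tprod n1 n (ttrans n (blockslice s A (t mod (n div s)))) R a b k))"

end

theory Submission
  imports Defs
begin

(* Write m = n/s, c = t mod m and E(t) = X(t) - X*. The blocks applied in the residual R(t+1)
   are the blocks (t - j) mod m, j < m, i.e. all m blocks once each, so they sum to A and
   R(t+1) = - sum_j A_((t-j) mod m) * E(t-j). Since X(0) = 0 the same holds in the start-up phase
   t < m - 1 with E(t-j) read as E(0). Hence
     E(t+1) = (I - alpha A_c^T * A_c) * E(t) - alpha sum_{j=1}^{m-1} A_c^T * A_((t-j) mod m) * E(t-j),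
   where (t-j) mod m differs from c for 0 < j < m, and taking Frobenius norms gives
     e(t+1) <= kappa e(t) + alpha mu sum_{j=1}^{m-1} e(t-j).
   With q = kappa + alpha mu (m-1) < 1 every window of m consecutive errors is bounded by one
   power of q, so e(t) <= e(0) q^(t div m) -> 0. *)

section \<open>Delay recurrences\<close>

lemma delay_recurrence_bound:
  fixes e :: "nat \<Rightarrow> real" and a b :: real and m :: nat
  assumes nonneg: "\<And>t. 0 \<le> e t"
    and rec: "\<And>t. e (Suc t) \<le> a * e t + b * (\<Sum>j\<in>{1..<m}. e (t - j))"
    and "0 \<le> a" "0 \<le> b" "a + b * (real m - 1) \<le> 1" "0 < m"
  shows "e t \<le> e 0 * (a + b * (real m - 1)) ^ (t div m)"
proof (induction t rule: less_induct)
  case (less t)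
  define q where "q = a + b * (real m - 1)"
  have "0 \<le> q" "q \<le> 1" using assms unfolding q_def by auto
  show ?case
  proof (cases t)
    case 0
    then show ?thesis by simp
  next
    case (Suc t')
    define r where "r = t div m"
    have earlier: "e (t' - j) \<le> e 0 * q ^ (r - 1)" if "j < m" for j
    proof -
      have "r * m \<le> Suc t'"
        using div_times_less_eq_dividend[of t m] Suc unfolding r_def by simp
      then have "(r - 1) * m \<le> t' - j"
        using that by (simp add: diff_mult_distrib)
      then have "r - 1 \<le> (t' - j) div m"
        using \<open>0 < m\<close> by (simp add: less_eq_div_iff_mult_less_eq)
      then have "e 0 * q ^ ((t' - j) div m) \<le> e 0 * q ^ (r - 1)"
        using \<open>0 \<le> q\<close> \<open>q \<le> 1\<close> nonneg by (intro mult_left_mono power_decreasing) auto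
      moreover have "e (t' - j) \<le> e 0 * q ^ ((t' - j) div m)"
        using less Suc unfolding q_def by simp
      ultimately show ?thesis by linarith
    qed
    have "e t \<le> a * e t' + b * (\<Sum>j\<in>{1..<m}. e (t' - j))"
      using rec Suc by simp
    also have "\<dots> \<le> a * (e 0 * q ^ (r - 1)) + b * (\<Sum>j\<in>{1..<m}. e 0 * q ^ (r - 1))"
      using earlier[of 0] earlier assms by (intro add_mono mult_left_mono sum_mono) auto
    also have "\<dots> = q * (e 0 * q ^ (r - 1))"
      using \<open>0 < m\<close> by (simp add: q_def algebra_simps of_nat_diff)
    also have "\<dots> \<le> e 0 * q ^ r"
      using \<open>0 \<le> q\<close> \<open>q \<le> 1\<close> nonneg[of 0]
      by (cases r) (auto simp: mult_left_le_one_le)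
    finally show ?thesis unfolding r_def q_def .
  qed
qed

lemma delay_recurrence_tendsto_zero:
  fixes e :: "nat \<Rightarrow> real" and a b :: real and m :: nat
  assumes nonneg: "\<And>t. 0 \<le> e t"
    and rec: "\<And>t. e (Suc t) \<le> a * e t + b * (\<Sum>j\<in>{1..<m}. e (t - j))"
    and "0 \<le> a" "0 \<le> b" "a + b * (real m - 1) < 1" "0 < m"
  shows "e \<longlonglongrightarrow> 0"
proof -
  define q where "q = a + b * (real m - 1)"
  have "0 \<le> q" using assms unfolding q_def by auto
  then have "(\<lambda>k. q ^ k) \<longlonglongrightarrow> 0"
    using assms unfolding q_def by (intro LIMSEQ_power_zero) auto
  then have "(\<lambda>t. q ^ (t div m)) \<longlonglongrightarrow> 0"
    using filterlim_at_top_div_const_nat[OF \<open>0 < m\<close>] by (rule filterlim_compose)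
  then have "(\<lambda>t. e 0 * q ^ (t div m)) \<longlonglongrightarrow> 0"
    using tendsto_mult_right_zero by blast
  moreover have "e t \<le> e 0 * q ^ (t div m)" for t
    unfolding q_def using assms by (intro delay_recurrence_bound[OF nonneg rec]) auto
  ultimately show ?thesis
    using nonneg by (intro tendsto_sandwich[of "\<lambda>_. 0" e _ "\<lambda>t. e 0 * q ^ (t div m)"]) auto
qed

section \<open>Frobenius norm\<close>

lemma tfrob_eq_L2_set: "tfrob p q n X = L2_set (\<lambda>(i, j, k). X i j k) ({..<p} \<times> {..<q} \<times> {..<n})"
  unfolding tfrob_def L2_set_def by (simp add: sum.cartesian_product case_prod_beta)

lemma tfrob_nonneg: "0 \<le> tfrob p q n X"
  unfolding tfrob_eq_L2_set by simp

lemma tfrob_cong: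
  assumes "\<And>i j k. i < p \<Longrightarrow> j < q \<Longrightarrow> k < n \<Longrightarrow> X i j k = Y i j k"
  shows "tfrob p q n X = tfrob p q n Y"
  unfolding tfrob_def using assms by (intro arg_cong[where f = sqrt] sum.cong) auto

lemma tfrob_add_le: "tfrob p q n (\<lambda>i j k. X i j k + Y i j k) \<le> tfrob p q n X + tfrob p q n Y"
proof -
  have "(\<lambda>(i, j, k). X i j k + Y i j k) = (\<lambda>x. (\<lambda>(i, j, k). X i j k) x + (\<lambda>(i, j, k). Y i j k) x)"
    by auto
  then show ?thesis
    unfolding tfrob_eq_L2_set by (simp only: L2_set_triangle_ineq)
qed

lemma tfrob_scale: "tfrob p q n (\<lambda>i j k. c * X i j k) = \<bar>c\<bar> * tfrob p q n X"
  unfolding tfrob_def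
  by (simp add: power_mult_distrib sum_distrib_left[symmetric] real_sqrt_mult)

lemma tfrob_diff_le: "tfrob p q n (\<lambda>i j k. X i j k - Y i j k) \<le> tfrob p q n X + tfrob p q n Y"
  using tfrob_add_le[of p q n X "\<lambda>i j k. - Y i j k"] tfrob_scale[of p q n "- 1" Y] by simp

lemma tfrob_sum_le:
  assumes "finite J"
  shows "tfrob p q n (\<lambda>i j k. \<Sum>l\<in>J. F l i j k) \<le> (\<Sum>l\<in>J. tfrob p q n (F l))"
  using assms
proof (induction J rule: finite_induct)
  case empty
  then show ?case by (simp add: tfrob_def)
next
  case (insert x J)
  then show ?case
    using tfrob_add_le[of p q n "F x" "\<lambda>i j k. \<Sum>l\<in>J. F l i j k"] by simp
qed

lemma abs_le_tfrob:
  assumes "i < p" "j < q" "k < n"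
  shows "\<bar>X i j k\<bar> \<le> tfrob p q n X"
  using member_le_L2_set[of "{..<p} \<times> {..<q} \<times> {..<n}" "(i, j, k)" "\<lambda>(i, j, k). \<bar>X i j k\<bar>"] assms
  unfolding tfrob_eq_L2_set L2_set_def by (simp add: case_prod_beta)

lemma tfrob_le_sum_abs: "tfrob p q n X \<le> (\<Sum>i<p. \<Sum>j<q. \<Sum>k<n. \<bar>X i j k\<bar>)"
  using L2_set_le_sum_abs[of "\<lambda>(i, j, k). X i j k" "{..<p} \<times> {..<q} \<times> {..<n}"]
  unfolding tfrob_eq_L2_set by (simp add: sum.cartesian_product case_prod_beta)

lemma tfrob_power2_eq_sum_columns:
  "(tfrob p r n X)\<^sup>2 = (\<Sum>j<r. (tfrob p 1 n (\<lambda>i _ k. X i j k))\<^sup>2)"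
proof -
  have "(tfrob p r n X)\<^sup>2 = (\<Sum>i<p. \<Sum>j<r. \<Sum>k<n. (X i j k)\<^sup>2)"
    unfolding tfrob_def by (simp add: sum_nonneg)
  also have "\<dots> = (\<Sum>j<r. \<Sum>i<p. \<Sum>k<n. (X i j k)\<^sup>2)"
    by (rule sum.swap)
  also have "\<dots> = (\<Sum>j<r. (tfrob p 1 n (\<lambda>i _ k. X i j k))\<^sup>2)"
    unfolding tfrob_def by (simp add: sum_nonneg)
  finally show ?thesis .
qed

section \<open>Cyclic index arithmetic and the t-product\<close>

definition sub_mod :: "nat \<Rightarrow> nat \<Rightarrow> nat \<Rightarrow> nat" where
  "sub_mod n k m = nat ((int k - int m) mod int n)"

lemma sub_mod_less: "0 < n \<Longrightarrow> sub_mod n k m < n"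
  by (simp add: sub_mod_def nat_less_iff)

lemma sub_mod_0: "sub_mod n k 0 = k mod n"
  by (simp add: sub_mod_def nat_mod_as_int)

lemma sub_mod_sub_mod_cancel: "m < n \<Longrightarrow> sub_mod n k (sub_mod n k m) = m"
  by (simp add: sub_mod_def mod_diff_right_eq)

lemma sub_mod_add_mod: "u < n \<Longrightarrow> sub_mod n ((u + c) mod n) c = u"
  by (simp add: sub_mod_def of_nat_mod mod_diff_left_eq)

lemma add_mod_sub_mod: "m < n \<Longrightarrow> (sub_mod n m c + c) mod n = m"
proof -
  assume "m < n"
  then have "int ((sub_mod n m c + c) mod n) = int m"
    by (simp add: sub_mod_def of_nat_mod mod_add_left_eq)
  then show ?thesis by simp
qed

lemma sub_mod_translate:
  assumes "0 < n"
  shows "sub_mod n (sub_mod n k c) (sub_mod n m c) = sub_mod n k m"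
  using assms by (simp add: sub_mod_def mod_diff_eq)

lemma bij_betw_sub_mod_right:
  assumes "0 < n"
  shows "bij_betw (sub_mod n k) {..<n} {..<n}"
  by (rule bij_betw_byWitness[where f' = "sub_mod n k"])
    (auto simp: sub_mod_sub_mod_cancel sub_mod_less assms)

lemma bij_betw_sub_mod_left:
  assumes "0 < n"
  shows "bij_betw (\<lambda>m. sub_mod n m c) {..<n} {..<n}"
  by (rule bij_betw_byWitness[where f' = "\<lambda>u. (u + c) mod n"])
    (auto simp: sub_mod_add_mod add_mod_sub_mod sub_mod_less assms)

lemma sub_mod_eq_0_iff:
  assumes "k < n" "m < n"
  shows "sub_mod n k m = 0 \<longleftrightarrow> m = k"
  using sub_mod_sub_mod_cancel[of m n k] sub_mod_sub_mod_cancel[of 0 n k] assms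
  by (auto simp: sub_mod_0)

lemma sub_mod_neq_mod:
  assumes "0 < j" "j < m"
  shows "sub_mod m t j \<noteq> t mod m"
proof
  assume "sub_mod m t j = t mod m"
  then have "j = sub_mod m t (sub_mod m t 0)"
    using sub_mod_sub_mod_cancel[of j m t] assms by (simp add: sub_mod_0)
  then show False
    using sub_mod_sub_mod_cancel[of 0 m t] assms by simp
qed

lemma tprod_eq: "tprod q n A X i j k = (\<Sum>l<q. \<Sum>m<n. A i l (sub_mod n k m) * X l j m)"
  by (simp add: tprod_def sub_mod_def)

lemma tprod_cong_right:
  assumes "\<And>l m. l < q \<Longrightarrow> m < n \<Longrightarrow> X l j m = Y l j m"
  shows "tprod q n A X i j k = tprod q n A Y i j k"
  unfolding tprod_eq using assms by (intro sum.cong refl) auto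

lemma tprod_zero_right: "tprod q n A (\<lambda>i j k. 0) = (\<lambda>i j k. 0)"
  by (simp add: tprod_def)

lemma tprod_diff_right:
  "tprod q n A (\<lambda>a b c. X a b c - Y a b c) i j k = tprod q n A X i j k - tprod q n A Y i j k"
  by (simp add: tprod_eq algebra_simps sum_subtractf)

lemma tprod_scale_right:
  "tprod q n A (\<lambda>a b c. r * X a b c) = (\<lambda>i j k. r * tprod q n A X i j k)"
  by (simp add: tprod_def algebra_simps sum_distrib_left)

lemma tprod_sum_right:
  "tprod q n A (\<lambda>a b c. \<Sum>l\<in>J. X l a b c) i j k = (\<Sum>l\<in>J. tprod q n A (X l) i j k)"
  by (simp add: tprod_eq sum_distrib_left sum.swap[of _ J])

lemma tprod_sum_left:
  "tprod q n (\<lambda>a b c. \<Sum>l\<in>J. A l a b c) X i j k = (\<Sum>l\<in>J. tprod q n (A l) X i j k)"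
  by (simp add: tprod_eq sum_distrib_right sum.swap[of _ J])

lemma tprod_diff_scale_left:
  "tprod q n (\<lambda>a b c. A a b c - r * C a b c) X i j k = tprod q n A X i j k - r * tprod q n C X i j k"
  by (simp add: tprod_eq algebra_simps sum_subtractf sum_distrib_left)

lemma tprod_tident_left:
  assumes "i < q" "k < n"
  shows "tprod q n tident X i j k = X i j k"
proof -
  have delta: "(if P then 1 else 0) * x = (if P then x else 0)" for P and x :: real
    by simp
  have "tprod q n tident X i j k = (\<Sum>l<q. if l = i then \<Sum>m<n. if m = k then X l j m else 0 else 0)"
    unfolding tprod_eq tident_def using assms
    by (intro sum.cong refl) (auto simp: sub_mod_eq_0_iff delta intro!: sum.cong)
  also have "\<dots> = X i j k"
    using assms by simp
  finally show ?thesis .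
qed

lemma sum_convolution_sub_mod_shift:
  assumes "0 < n"
  shows "(\<Sum>m<n. f (sub_mod n k m) * g (sub_mod n m c)) = (\<Sum>u<n. f (sub_mod n (sub_mod n k c) u) * g u)"
  using sum.reindex_bij_betw[OF bij_betw_sub_mod_left[OF assms, of c],
      of "\<lambda>u. f (sub_mod n (sub_mod n k c) u) * g u"]
  by (simp add: sub_mod_translate[OF assms])

lemma tprod_assoc:
  assumes "0 < n"
  shows "tprod p n T (tprod q n A X) i j k = tprod q n (tprod p n T A) X i j k"
proof -
  have shift: "(\<Sum>m<n. T i l (sub_mod n k m) * A l l' (sub_mod n m m'))
      = (\<Sum>u<n. T i l (sub_mod n (sub_mod n k m') u) * A l l' u)" for l l' m'
    by (rule sum_convolution_sub_mod_shift[OF assms])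
  have "tprod p n T (tprod q n A X) i j k
      = (\<Sum>l<p. \<Sum>m<n. \<Sum>l'<q. \<Sum>m'<n. T i l (sub_mod n k m) * A l l' (sub_mod n m m') * X l' j m')"
    by (simp add: tprod_eq sum_distrib_left mult.assoc)
  also have "\<dots> = (\<Sum>l'<q. \<Sum>m'<n. \<Sum>l<p. \<Sum>m<n. T i l (sub_mod n k m) * A l l' (sub_mod n m m') * X l' j m')"
    unfolding sum.cartesian_product
    by (rule sum.reindex_bij_witness[of _ "\<lambda>(l', m', l, m). (l, m, l', m')" "\<lambda>(l, m, l', m'). (l', m', l, m)"])
      auto
  also have "\<dots> = (\<Sum>l'<q. \<Sum>m'<n. (\<Sum>l<p. \<Sum>m<n. T i l (sub_mod n k m) * A l l' (sub_mod n m m')) * X l' j m')"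
    by (simp add: sum_distrib_right)
  also have "\<dots> = tprod q n (tprod p n T A) X i j k"
    by (simp add: tprod_eq shift)
  finally show ?thesis .
qed

section \<open>Operator norm\<close>

lemma topnorm_bdd_above: "bdd_above {tfrob p 1 n (tprod q n C X) | X. tfrob q 1 n X = 1}"
proof -
  define K where "K = (\<Sum>i<p. \<Sum>k<n. \<Sum>l<q. \<Sum>m<n. \<bar>C i l (sub_mod n k m)\<bar>)"
  have "tfrob p 1 n (tprod q n C X) \<le> K" if unit: "tfrob q 1 n X = 1" for X
  proof -
    have "\<bar>X l 0 m\<bar> \<le> 1" if "l < q" "m < n" for l m
      using abs_le_tfrob[of l q 0 1 m n X] that unit by simp
    then have entry: "\<bar>tprod q n C X i 0 k\<bar> \<le> (\<Sum>l<q. \<Sum>m<n. \<bar>C i l (sub_mod n k m)\<bar>)" for i k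
      unfolding tprod_eq
      by (intro order_trans[OF sum_abs] sum_mono order_trans[OF sum_abs])
        (auto simp: abs_mult mult_left_le)
    have "tfrob p 1 n (tprod q n C X) \<le> (\<Sum>i<p. \<Sum>j<1. \<Sum>k<n. \<bar>tprod q n C X i j k\<bar>)"
      by (rule tfrob_le_sum_abs)
    also have "\<dots> \<le> K"
      unfolding K_def using entry by (simp add: sum_mono)
    finally show ?thesis .
  qed
  then show ?thesis
    unfolding bdd_above_def by blast
qed

lemma tfrob_tprod_le_topnorm:
  assumes "tfrob q 1 n X = 1"
  shows "tfrob p 1 n (tprod q n C X) \<le> topnorm p q n C"
  unfolding topnorm_def using assms by (intro cSup_upper topnorm_bdd_above) blast

lemma topnorm_nonneg:
  assumes "0 < q" "0 < n"
  shows "0 \<le> topnorm p q n C"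
proof -
  define E :: tensor where "E = (\<lambda>l _ m. if m = 0 then if l = 0 then 1 else 0 else 0)"
  have "(E l j m)\<^sup>2 = E l j m" for l j m
    by (simp add: E_def)
  then have "tfrob q 1 n E = 1"
    using assms by (simp add: tfrob_def E_def)
  then show ?thesis
    using tfrob_tprod_le_topnorm tfrob_nonneg order_trans by blast
qed

lemma tfrob_tprod_column_le:
  assumes "0 < q" "0 < n"
  shows "tfrob p 1 n (tprod q n C X) \<le> topnorm p q n C * tfrob q 1 n X"
proof (cases "tfrob q 1 n X = 0")
  case True
  then have "X l 0 m = 0" if "l < q" "m < n" for l m
    using abs_le_tfrob[of l q 0 1 m n X] that by simp
  then have "tfrob p 1 n (tprod q n C X) = tfrob p 1 n (tprod q n C (\<lambda>i j k. 0))"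
    by (intro tfrob_cong tprod_cong_right) auto
  then show ?thesis
    using True by (simp add: tprod_zero_right tfrob_def)
next
  case False
  define f where "f = tfrob q 1 n X"
  have "0 < f"
    using False tfrob_nonneg[of q 1 n X] unfolding f_def by linarith
  have "tfrob q 1 n (\<lambda>i j k. (1 / f) * X i j k) = 1"
    unfolding tfrob_scale using \<open>0 < f\<close> f_def by simp
  then have "tfrob p 1 n (tprod q n C (\<lambda>i j k. (1 / f) * X i j k)) \<le> topnorm p q n C"
    by (rule tfrob_tprod_le_topnorm)
  then have "(1 / f) * tfrob p 1 n (tprod q n C X) \<le> topnorm p q n C"
    unfolding tprod_scale_right tfrob_scale using \<open>0 < f\<close> by simp
  then show ?thesis
    using \<open>0 < f\<close> unfolding f_def[symmetric] by (simp add: field_simps)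
qed

lemma tfrob_tprod_le:
  assumes "0 < q" "0 < n"
  shows "tfrob p r n (tprod q n C X) \<le> topnorm p q n C * tfrob q r n X"
proof -
  let ?N = "topnorm p q n C"
  have column: "(\<lambda>i (_::nat) k. tprod q n C X i j k) = tprod q n C (\<lambda>i _ k. X i j k)" for j
    by (simp add: tprod_def)
  have "(tfrob p r n (tprod q n C X))\<^sup>2 = (\<Sum>j<r. (tfrob p 1 n (tprod q n C (\<lambda>i _ k. X i j k)))\<^sup>2)"
    unfolding tfrob_power2_eq_sum_columns[of p r n] column ..
  also have "\<dots> \<le> (\<Sum>j<r. (?N * tfrob q 1 n (\<lambda>i _ k. X i j k))\<^sup>2)"
    using tfrob_tprod_column_le[OF assms]
    by (intro sum_mono power_mono) (auto simp: tfrob_nonneg)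
  also have "\<dots> = (?N * tfrob q r n X)\<^sup>2"
    by (simp add: tfrob_power2_eq_sum_columns[of q r n X] power_mult_distrib sum_distrib_left)
  finally show ?thesis
    using topnorm_nonneg[OF assms] tfrob_nonneg by (meson mult_nonneg_nonneg power2_le_imp_le)
qed

section \<open>Frontal slice blocks\<close>

lemma blockslice_window_iff:
  fixes i k s :: nat
  assumes "0 < s"
  shows "i * s \<le> k \<and> k < i * s + s \<longleftrightarrow> i = k div s"
proof
  assume "i * s \<le> k \<and> k < i * s + s"
  then show "i = k div s"
    using div_nat_eqI[of s i k] by (simp add: mult.commute)
next
  assume "i = k div s"
  then show "i * s \<le> k \<and> k < i * s + s"
    using dividend_less_div_times[OF assms, of k] by simp
qed

lemma sum_blockslice:
  assumes "0 < s" "k < m * s"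
  shows "(\<Sum>c<m. blockslice s A c a b k) = A a b k"
proof -
  have "(\<Sum>c<m. blockslice s A c a b k) = (\<Sum>c<m. if c = k div s then A a b k else 0)"
    unfolding blockslice_def using blockslice_window_iff[OF assms(1)] by (intro sum.cong) auto
  also have "\<dots> = A a b k"
    using assms by (simp add: div_less_iff_less_mult)
  finally show ?thesis .
qed

lemma tprod_eq_sum_blockslice:
  assumes "0 < s" "n = m * s"
  shows "tprod q n A X i j k = (\<Sum>c<m. tprod q n (blockslice s A c) X i j k)"
proof -
  have "A i l (sub_mod n k u) = (\<Sum>c<m. blockslice s A c i l (sub_mod n k u))" if "u < n" for l u
    using sum_blockslice[OF assms(1), of "sub_mod n k u" m A i l] sub_mod_less[of n k u] that assms(2)
    by (metis gr_implies_not0 not_gr_zero)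
  then have "tprod q n A X i j k = tprod q n (\<lambda>a b k. \<Sum>c<m. blockslice s A c a b k) X i j k"
    unfolding tprod_eq by (intro sum.cong refl) simp_all
  then show ?thesis
    by (simp add: tprod_sum_left)
qed

definition block_gram :: "nat \<Rightarrow> nat \<Rightarrow> nat \<Rightarrow> tensor \<Rightarrow> nat \<Rightarrow> nat \<Rightarrow> tensor" where
  "block_gram n1 n s A c d = tprod n1 n (ttrans n (blockslice s A c)) (blockslice s A d)"

lemma topnorm_le_kappa:
  assumes "c < n div s"
  shows "topnorm n2 n2 n (\<lambda>a b k. tident a b k - \<alpha> * block_gram n1 n s A c c a b k)
    \<le> kappa n1 n2 n s \<alpha> A"
  unfolding kappa_def block_gram_def using assms by (intro Max_ge) auto

lemma topnorm_block_gram_le_mu: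
  assumes "c < n div s" "d < n div s" "c \<noteq> d"
  shows "topnorm n2 n2 n (block_gram n1 n s A c d) \<le> mu n1 n2 n s A"
proof -
  let ?norm = "\<lambda>c d. topnorm n2 n2 n (block_gram n1 n s A c d)"
  have "finite {?norm c d | c d. c < n div s \<and> d < n div s}"
    by (rule finite_image_set2) auto
  then have "finite {?norm c d | c d. c < n div s \<and> d < n div s \<and> c \<noteq> d}"
    by (rule finite_subset[rotated]) blast
  then show ?thesis
    unfolding mu_def block_gram_def[symmetric] using assms by (intro Max_ge) auto
qed

lemma kappa_nonneg:
  assumes "0 < n2" "0 < n" "0 < n div s"
  shows "0 \<le> kappa n1 n2 n s \<alpha> A"
  using topnorm_le_kappa[OF assms(3)] topnorm_nonneg[OF assms(1,2)] by (rule order_trans[rotated])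

lemma mu_nonneg:
  assumes "0 < n2" "0 < n" "2 \<le> n div s"
  shows "0 \<le> mu n1 n2 n s A"
proof -
  have "0 \<le> topnorm n2 n2 n (block_gram n1 n s A 0 1)"
    by (rule topnorm_nonneg[OF assms(1,2)])
  also have "\<dots> \<le> mu n1 n2 n s A"
    using assms(3) by (intro topnorm_block_gram_le_mu) auto
  finally show ?thesis .
qed

section \<open>Error recursion of block cyclic frontal slice descent\<close>

lemma bcfsd_residual_eq:
  fixes \<alpha> :: real and A B Xs :: tensor
  assumes "0 < s" "s dvd n"
    and sol: "\<forall>i<n1. \<forall>j<n3. \<forall>k<n. tprod n2 n A Xs i j k = B i j k"
    and "a < n1" "b < n3" "k < n"
  defines "m \<equiv> n div s"
  shows "B a b k - (\<Sum>j<m. if j \<le> t then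
             tprod n2 n (blockslice s A (sub_mod m t j)) (bcfsd n1 n2 n s \<alpha> A B (t - j)) a b k else 0)
    = - (\<Sum>j<m. tprod n2 n (blockslice s A (sub_mod m t j))
             (\<lambda>i j' k. bcfsd n1 n2 n s \<alpha> A B (t - j) i j' k - Xs i j' k) a b k)"
proof -
  have "0 < m"
    using assms dvd_div_eq_0_iff[of s n] unfolding m_def by auto
  have guard: "(if j \<le> t then tprod n2 n C (bcfsd n1 n2 n s \<alpha> A B (t - j)) a b k else 0)
      = tprod n2 n C (bcfsd n1 n2 n s \<alpha> A B (t - j)) a b k" for j C
    by (cases "j \<le> t") (auto simp: tprod_zero_right)
  have "B a b k = tprod n2 n A Xs a b k"
    using sol assms by simp
  also have "\<dots> = (\<Sum>c<m. tprod n2 n (blockslice s A c) Xs a b k)"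
    using assms by (intro tprod_eq_sum_blockslice) (auto simp: m_def)
  also have "\<dots> = (\<Sum>j<m. tprod n2 n (blockslice s A (sub_mod m t j)) Xs a b k)"
    using sum.reindex_bij_betw[OF bij_betw_sub_mod_right[OF \<open>0 < m\<close>],
        of "\<lambda>c. tprod n2 n (blockslice s A c) Xs a b k" t]
    by simp
  finally show ?thesis
    by (simp add: guard tprod_diff_right sum_subtractf)
qed

lemma bcfsd_error_step:
  fixes \<alpha> :: real and A B Xs :: tensor
  assumes "0 < s" "s dvd n"
    and sol: "\<forall>i<n1. \<forall>j<n3. \<forall>k<n. tprod n2 n A Xs i j k = B i j k"
    and "i < n2" "b < n3" "k < n"
  defines "E \<equiv> \<lambda>t i j k. bcfsd n1 n2 n s \<alpha> A B t i j k - Xs i j k"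
    and "m \<equiv> n div s"
  shows "E (Suc t) i b k
    = tprod n2 n (\<lambda>i' j' k'. tident i' j' k' - \<alpha> * block_gram n1 n s A (t mod m) (t mod m) i' j' k') (E t) i b k
      - \<alpha> * (\<Sum>j\<in>{1..<m}. tprod n2 n (block_gram n1 n s A (t mod m) (sub_mod m t j)) (E (t - j)) i b k)"
proof -
  define c where "c = t mod m"
  define T where "T = ttrans n (blockslice s A c)"
  define R where "R = (\<lambda>a b k. B a b k - (\<Sum>j<m. if j \<le> t then
      tprod n2 n (blockslice s A (sub_mod m t j)) (bcfsd n1 n2 n s \<alpha> A B (t - j)) a b k else 0))"
  define G where "G j = tprod n2 n (block_gram n1 n s A c (sub_mod m t j)) (E (t - j))" for j
  have "0 < n" "0 < m"
    using assms dvd_div_eq_0_iff[of s n] unfolding m_def by auto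
  have step: "E (Suc t) i b k = E t i b k + \<alpha> * tprod n1 n T R i b k"
    unfolding E_def T_def R_def c_def m_def sub_mod_def by (simp add: Let_def)
  have "tprod n1 n T R i b k = tprod n1 n T (\<lambda>a b' k'. (- 1) *
      (\<Sum>j<m. tprod n2 n (blockslice s A (sub_mod m t j)) (E (t - j)) a b' k')) i b k"
    using bcfsd_residual_eq[OF assms(1,2) sol _ \<open>b < n3\<close>]
    unfolding R_def E_def m_def by (intro tprod_cong_right) auto
  also have "\<dots> = - (\<Sum>j<m. G j i b k)"
    unfolding tprod_scale_right tprod_sum_right
    using \<open>0 < n\<close> by (simp add: tprod_assoc G_def block_gram_def T_def)
  also have "(\<Sum>j<m. G j i b k) = G 0 i b k + (\<Sum>j\<in>{1..<m}. G j i b k)"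
    using \<open>0 < m\<close> by (simp add: lessThan_atLeast0 sum.atLeast_Suc_lessThan)
  finally have TR: "tprod n1 n T R i b k = - (G 0 i b k + (\<Sum>j\<in>{1..<m}. G j i b k))" .
  have diag: "tprod n2 n (\<lambda>i' j' k'. tident i' j' k' - \<alpha> * block_gram n1 n s A c c i' j' k') (E t) i b k
      = E t i b k - \<alpha> * G 0 i b k"
    using assms(4,6) by (simp add: tprod_diff_scale_left tprod_tident_left G_def sub_mod_0 c_def)
  show ?thesis
    using step TR diag by (simp add: G_def c_def algebra_simps)
qed

lemma bcfsd_error_recurrence:
  fixes \<alpha> :: real and A B Xs :: tensor
  assumes "0 < s" "s dvd n" "0 < n" "0 < n2" "0 \<le> \<alpha>"
    and sol: "\<forall>i<n1. \<forall>j<n3. \<forall>k<n. tprod n2 n A Xs i j k = B i j k"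
  defines "e \<equiv> \<lambda>t. tfrob n2 n3 n (\<lambda>i j k. bcfsd n1 n2 n s \<alpha> A B t i j k - Xs i j k)"
  shows "e (Suc t) \<le> kappa n1 n2 n s \<alpha> A * e t + \<alpha> * mu n1 n2 n s A * (\<Sum>j\<in>{1..<n div s}. e (t - j))"
proof -
  define m where "m = n div s"
  define c where "c = t mod m"
  define E where "E t = (\<lambda>i j k. bcfsd n1 n2 n s \<alpha> A B t i j k - Xs i j k)" for t
  define D where "D = (\<lambda>i' j' k'. tident i' j' k' - \<alpha> * block_gram n1 n s A c c i' j' k')"
  define G where "G j = tprod n2 n (block_gram n1 n s A c (sub_mod m t j)) (E (t - j))" for j
  have "0 < m"
    using assms dvd_div_eq_0_iff[of s n] unfolding m_def by auto
  then have "c < m"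
    unfolding c_def by simp
  have "e (Suc t) = tfrob n2 n3 n (\<lambda>i b k. tprod n2 n D (E t) i b k - \<alpha> * (\<Sum>j\<in>{1..<m}. G j i b k))"
    unfolding e_def using bcfsd_error_step[OF assms(1,2) sol]
    by (intro tfrob_cong) (simp add: E_def G_def D_def c_def m_def)
  also have "\<dots> \<le> tfrob n2 n3 n (tprod n2 n D (E t)) + \<alpha> * tfrob n2 n3 n (\<lambda>i b k. \<Sum>j\<in>{1..<m}. G j i b k)"
    using tfrob_diff_le[of n2 n3 n "tprod n2 n D (E t)" "\<lambda>i b k. \<alpha> * (\<Sum>j\<in>{1..<m}. G j i b k)"]
    unfolding tfrob_scale using \<open>0 \<le> \<alpha>\<close> by simp
  also have "\<dots> \<le> topnorm n2 n2 n D * e t + \<alpha> * (\<Sum>j\<in>{1..<m}. tfrob n2 n3 n (G j))"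
    unfolding e_def E_def using assms
    by (intro add_mono tfrob_tprod_le mult_left_mono tfrob_sum_le) auto
  also have "\<dots> \<le> kappa n1 n2 n s \<alpha> A * e t + \<alpha> * (\<Sum>j\<in>{1..<m}. mu n1 n2 n s A * e (t - j))"
  proof (intro add_mono mult_left_mono mult_right_mono sum_mono)
    show "topnorm n2 n2 n D \<le> kappa n1 n2 n s \<alpha> A"
      unfolding D_def using \<open>c < m\<close> m_def by (intro topnorm_le_kappa) auto
    fix j assume j: "j \<in> {1..<m}"
    have "tfrob n2 n3 n (G j) \<le> topnorm n2 n2 n (block_gram n1 n s A c (sub_mod m t j)) * e (t - j)"
      unfolding G_def e_def E_def using assms by (intro tfrob_tprod_le) auto
    also have "\<dots> \<le> mu n1 n2 n s A * e (t - j)"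
      using j sub_mod_neq_mod[of j m t] sub_mod_less[OF \<open>0 < m\<close>] \<open>c < m\<close>
      unfolding e_def c_def m_def
      by (intro mult_right_mono topnorm_block_gram_le_mu tfrob_nonneg) auto
    finally show "tfrob n2 n3 n (G j) \<le> mu n1 n2 n s A * e (t - j)" .
  qed (auto simp: e_def tfrob_nonneg \<open>0 \<le> \<alpha>\<close>)
  also have "\<dots> = kappa n1 n2 n s \<alpha> A * e t + \<alpha> * mu n1 n2 n s A * (\<Sum>j\<in>{1..<n div s}. e (t - j))"
    by (simp add: sum_distrib_left m_def mult.assoc)
  finally show ?thesis .
qed

theorem corollary3:
  fixes n1 n2 n3 n s :: nat and \<alpha> :: real and A B Xs :: tensor
  assumes "n \<ge> 2" and "2 \<le> s" and "s < n" and "s dvd n"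
    and sol: "\<forall>i<n1. \<forall>j<n3. \<forall>k<n. tprod n2 n A Xs i j k = B i j k"
    and uniq: "\<forall>X. (\<forall>i<n1. \<forall>j<n3. \<forall>k<n. tprod n2 n A X i j k = B i j k) \<longrightarrow>
                 (\<forall>i<n2. \<forall>j<n3. \<forall>k<n. X i j k = Xs i j k)"
    and "\<alpha> > 0"
    and "kappa n1 n2 n s \<alpha> A + \<alpha> * mu n1 n2 n s A * (real (n div s) - 1) < 1"
  shows "(\<lambda>t. (tfrob n2 n3 n (\<lambda>i j k. bcfsd n1 n2 n s \<alpha> A B t i j k - Xs i j k))\<^sup>2)
           \<longlonglongrightarrow> 0"
proof (cases "n2 = 0")
  case True
  then show ?thesis by (simp add: tfrob_def)
next
  case False
  define e where "e t = tfrob n2 n3 n (\<lambda>i j k. bcfsd n1 n2 n s \<alpha> A B t i j k - Xs i j k)" for t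
  have "2 \<le> n div s"
    using assms(3,4) \<open>2 \<le> s\<close> by (auto elim!: dvdE)
  have "e \<longlonglongrightarrow> 0"
  proof (rule delay_recurrence_tendsto_zero)
    show "e (Suc t) \<le> kappa n1 n2 n s \<alpha> A * e t + \<alpha> * mu n1 n2 n s A * (\<Sum>j\<in>{1..<n div s}. e (t - j))" for t
      unfolding e_def using assms False by (intro bcfsd_error_recurrence) auto
    show "0 \<le> kappa n1 n2 n s \<alpha> A" "0 \<le> \<alpha> * mu n1 n2 n s A"
      using kappa_nonneg mu_nonneg \<open>2 \<le> n div s\<close> False assms by auto
  qed (use assms tfrob_nonneg in \<open>auto simp: e_def\<close>)
  then show ?thesis
    using tendsto_power[of e 0 sequentially 2] by (simp add: e_def)
qed

end
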